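(* Let $\Gamma$ be a weighted digraph with vertex set $V$ and normalized matrix of maximum out-forests $\bar J$; let $\widetilde K$ be the union of the vertex sets of all basis bicomponents of $\Gamma$; for $k\in\widetilde K$ let $K(k)$ be the basis bicomponent containing $k$ and $K^+(k)$ the set of vertices reachable by directed paths from $K(k)$ and unreachable from all other basis bicomponents. Then for all $i,j\in V$: (1) $\bar J_{ii}\ge\bar J_{ji}$; (2) if $\bar J_{ii}>\bar J_{ji}$, then $i\in\widetilde K$ and $j\notin K^+(i)$, and $\Gamma$ contains no directed path from $j$ to $i$; (3) if $\bar J_{ii}>\bar J_{ji}>0$, then $j\notin\widetilde K$, and consequently $j$ is not a root in any maximum out-forest of $\Gamma$; (4) if $\bar J_{ij}>0$, then $\bar J_{ii}=\bar J_{ji}$.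
   Context: A weighted digraph $\Gamma$ has no loops and each arc has a positive weight. A diverging tree is a rooted directed tree with directed paths from its root to all its other vertices; an out-forest is a spanning subgraph whose weak components are diverging trees; a maximum out-forest is one with the maximum number of arcs. The weight of a subgraph is the product of its arc weights. $\bar J_{ij}$ is the total weight of the maximum out-forests of $\Gamma$ in which $i$ belongs to the tree rooted at $j$, divided by the total weight of all maximum out-forests. A basis bicomponent is a strong component into which no arc enters from outside it. *)

theory Defs
  imports Complex_Main
begin

definition wdigraph :: "'a set \<Rightarrow> ('a \<times> 'a) set \<Rightarrow> ('a \<times> 'a \<Rightarrow> real) \<Rightarrow> bool" where
  "wdigraph V A w \<longleftrightarrow> finite V \<and> A \<subseteq> V \<times> V \<and> (\<forall>v. (v, v) \<notin> A) \<and> (\<forall>e\<in>A. w e > 0)"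

definition weak_comp :: "'a set \<Rightarrow> ('a \<times> 'a) set \<Rightarrow> 'a \<Rightarrow> 'a set" where
  "weak_comp V F v = {u \<in> V. (v, u) \<in> (F \<union> F\<inverse>)\<^sup>*}"

text \<open>The arcs of F on the vertex set C form a diverging tree: the underlying
  graph is a tree (connected, which follows from reachability from the root,
  with |C| - 1 arcs) and there is a root from which every vertex of C is
  reachable by a directed path.\<close>
definition diverging_tree :: "'a set \<Rightarrow> ('a \<times> 'a) set \<Rightarrow> bool" where
  "diverging_tree C F \<longleftrightarrow> finite C \<and> F \<subseteq> C \<times> C \<and> card F + 1 = card C \<and>
     (\<exists>r\<in>C. \<forall>u\<in>C. (r, u) \<in> F\<^sup>*)"

definition out_forest :: "'a set \<Rightarrow> ('a \<times> 'a) set \<Rightarrow> ('a \<times> 'a) set \<Rightarrow> bool" where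
  "out_forest V A F \<longleftrightarrow> F \<subseteq> A \<and>
     (\<forall>v\<in>V. diverging_tree (weak_comp V F v) (F \<inter> (weak_comp V F v \<times> weak_comp V F v)))"

definition max_out_forest :: "'a set \<Rightarrow> ('a \<times> 'a) set \<Rightarrow> ('a \<times> 'a) set \<Rightarrow> bool" where
  "max_out_forest V A F \<longleftrightarrow> out_forest V A F \<and> (\<forall>G. out_forest V A G \<longrightarrow> card G \<le> card F)"

text \<open>In the out-forest F, vertex i belongs to the tree rooted at j
  (the root of a diverging tree is the vertex from which all vertices of its
  weak component are reachable).\<close>
definition in_tree_rooted :: "'a set \<Rightarrow> ('a \<times> 'a) set \<Rightarrow> 'a \<Rightarrow> 'a \<Rightarrow> bool" where
  "in_tree_rooted V F i j \<longleftrightarrow> i \<in> V \<and> j \<in> V \<and> i \<in> weak_comp V F j \<and>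
     (\<forall>u\<in>weak_comp V F j. (j, u) \<in> F\<^sup>*)"

definition is_root :: "'a set \<Rightarrow> ('a \<times> 'a) set \<Rightarrow> 'a \<Rightarrow> bool" where
  "is_root V F j \<longleftrightarrow> in_tree_rooted V F j j"

definition subgraph_weight :: "('a \<times> 'a \<Rightarrow> real) \<Rightarrow> ('a \<times> 'a) set \<Rightarrow> real" where
  "subgraph_weight w F = (\<Prod>e\<in>F. w e)"

definition Jbar :: "'a set \<Rightarrow> ('a \<times> 'a) set \<Rightarrow> ('a \<times> 'a \<Rightarrow> real) \<Rightarrow> 'a \<Rightarrow> 'a \<Rightarrow> real" where
  "Jbar V A w i j =
     (\<Sum>F\<in>{F. max_out_forest V A F \<and> in_tree_rooted V F i j}. subgraph_weight w F) /
     (\<Sum>F\<in>{F. max_out_forest V A F}. subgraph_weight w F)"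

definition strong_comp :: "'a set \<Rightarrow> ('a \<times> 'a) set \<Rightarrow> 'a \<Rightarrow> 'a set" where
  "strong_comp V A v = {u \<in> V. (v, u) \<in> A\<^sup>* \<and> (u, v) \<in> A\<^sup>*}"

definition basis_bicomp :: "'a set \<Rightarrow> ('a \<times> 'a) set \<Rightarrow> 'a set \<Rightarrow> bool" where
  "basis_bicomp V A K \<longleftrightarrow> (\<exists>v\<in>V. K = strong_comp V A v) \<and>
     (\<forall>(u, v)\<in>A. v \<in> K \<longrightarrow> u \<in> K)"

definition Ktilde :: "'a set \<Rightarrow> ('a \<times> 'a) set \<Rightarrow> 'a set" where
  "Ktilde V A = \<Union>{K. basis_bicomp V A K}"

definition Kplus :: "'a set \<Rightarrow> ('a \<times> 'a) set \<Rightarrow> 'a \<Rightarrow> 'a set" where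
  "Kplus V A k = {v \<in> V. (\<exists>u\<in>strong_comp V A k. (u, v) \<in> A\<^sup>*) \<and>
     (\<forall>K'. basis_bicomp V A K' \<and> K' \<noteq> strong_comp V A k \<longrightarrow> (\<forall>u\<in>K'. (u, v) \<notin> A\<^sup>*))}"

end

theory Submission
  imports Defs
begin

(* An arc set F is an out-forest of (V, A) exactly when F \<subseteq> A is a
   branching: every vertex has at most one incoming arc of F and F is acyclic.
   The roots of an out-forest are the vertices without an incoming arc.
   The combinatorial heart is an exchange argument: if a root r of a branching
   F does not reach, inside F, some vertex x from which r is reachable in A,
   then arcs can be re-routed until a strictly larger branching appears.
   Hence in a maximum out-forest every root r reaches along F every vertex that
   reaches r in A; in particular the strong component of r is a basis
   bicomponent.
   On the weighted side, Jbar j i and Jbar i i are normalised sums of positive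
   weights over nested families of maximum out-forests (j in the tree rooted
   at i, resp. i being a root), so Jbar j i \<le> Jbar i i, with strict inequality
   iff some maximum out-forest has i as a root but j outside its tree.  In such
   a forest the root r of j's tree cannot reach i in A, which yields items (2)
   to (4) of the theorem; item (1) is the monotonicity itself. *)


section \<open>Relations in which every vertex has at most one predecessor\<close>

lemma reach_from_source_along_weak_path:
  assumes "(x, y) \<in> (F \<union> F\<inverse>)\<^sup>*" "(r, x) \<in> F\<^sup>*" "r \<notin> snd ` F" "inj_on snd F"
  shows "(r, y) \<in> F\<^sup>*"
  using assms(1)
proof (induction rule: rtrancl_induct)
  case base
  show ?case using assms(2) .
next
  case (step y z)
  from step.hyps(2) show ?case
  proof
    assume "(y, z) \<in> F"
    then show ?thesis using step.IH by (meson rtrancl_into_rtrancl)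
  next
    assume "(y, z) \<in> F\<inverse>"
    then have zy: "(z, y) \<in> F" by simp
    then have "r \<noteq> y" using assms(3) by force
    then have "(r, y) \<in> F\<^sup>+" using step.IH by (simp add: rtrancl_eq_or_trancl)
    then obtain y' where y': "(r, y') \<in> F\<^sup>*" "(y', y) \<in> F" by (auto dest: tranclD2)
    have "y' = z" using inj_onD[OF assms(4) _ y'(2) zy] by simp
    then show ?thesis using y'(1) by simp
  qed
qed

text \<open>If every vertex of V is reached from a source of a unique-predecessor
  relation on V, then the relation is acyclic: a cycle could never be entered.\<close>
lemma acyclic_if_reached_from_sources:
  assumes inj: "inj_on snd F" and FV: "F \<subseteq> V \<times> V"
    and src: "\<forall>v\<in>V. \<exists>r. r \<notin> snd ` F \<and> (r, v) \<in> F\<^sup>*"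
  shows "acyclic F"
  unfolding acyclic_def
proof
  fix x
  show "(x, x) \<notin> F\<^sup>+"
  proof
    assume cyc: "(x, x) \<in> F\<^sup>+"
    then obtain z where "(x, z) \<in> F" by (auto dest: tranclD)
    then obtain r where r: "r \<notin> snd ` F" "(r, x) \<in> F\<^sup>*" using FV src by blast
    have "(v, v) \<notin> F\<^sup>+" if "(r, v) \<in> F\<^sup>*" for v
      using that
    proof (induction rule: rtrancl_induct)
      case base
      show ?case
      proof
        assume "(r, r) \<in> F\<^sup>+"
        then obtain y where "(y, r) \<in> F" by (auto dest: tranclD2)
        then show False using r(1) by force
      qed
    next
      case (step u v)
      show ?case
      proof
        assume "(v, v) \<in> F\<^sup>+"
        then obtain y where y: "(v, y) \<in> F\<^sup>*" "(y, v) \<in> F" by (auto dest: tranclD2)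
        have "y = u" using inj_onD[OF inj _ y(2) step.hyps(2)] by simp
        then have "(u, u) \<in> F\<^sup>+" using step.hyps(2) y(1) by (meson rtrancl_into_trancl2)
        then show False using step.IH by simp
      qed
    qed
    then show False using r(2) cyc by blast
  qed
qed

lemma finite_acyclic_reached_from_source:
  assumes "finite F" "acyclic F"
  shows "\<exists>r. r \<notin> snd ` F \<and> (r, v) \<in> F\<^sup>*"
proof -
  have "wf F" using assms finite_acyclic_wf by blast
  then show ?thesis
  proof (induction v rule: wf_induct_rule)
    case (less v)
    show ?case
    proof (cases "v \<in> snd ` F")
      case True
      then obtain u where u: "(u, v) \<in> F" by force
      then obtain r where "r \<notin> snd ` F" "(r, u) \<in> F\<^sup>*" using less by blast
      then show ?thesis using u by (meson rtrancl.rtrancl_into_rtrancl)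
    qed blast
  qed
qed

lemma rtrancl_enters_set:
  assumes "(x, y) \<in> A\<^sup>*" "x \<notin> T" "y \<in> T"
  shows "\<exists>a b. (a, b) \<in> A \<and> a \<notin> T \<and> b \<in> T"
  using assms by (induction rule: rtrancl_induct) blast+

lemma rtrancl_source_in:
  assumes "(r, v) \<in> F\<^sup>*" "F \<subseteq> V \<times> V" "v \<in> V"
  shows "r \<in> V"
  using assms by (cases rule: converse_rtranclE) auto


section \<open>Out-forests are branchings\<close>

definition branching :: "('a \<times> 'a) set \<Rightarrow> bool" where
  "branching F \<longleftrightarrow> inj_on snd F \<and> acyclic F"

text \<open>A diverging tree has |C| - 1 arcs, one entering each non-root vertex; hence
  the heads of its arcs are distinct and the root has no incoming arc.\<close>
lemma diverging_tree_root:
  assumes "diverging_tree C T"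
  obtains r where "r \<in> C" "r \<notin> snd ` T" "inj_on snd T" "\<forall>u\<in>C. (r, u) \<in> T\<^sup>*"
proof -
  from assms obtain r where r: "r \<in> C" "\<forall>u\<in>C. (r, u) \<in> T\<^sup>*" and finC: "finite C"
    and cardT: "card T + 1 = card C" and TC: "T \<subseteq> C \<times> C"
    unfolding diverging_tree_def by blast
  have finT: "finite T" using finite_subset[OF TC] finC by simp
  have heads: "C - {r} \<subseteq> snd ` T"
  proof
    fix u assume "u \<in> C - {r}"
    then have "(r, u) \<in> T\<^sup>+" using r by (auto simp: rtrancl_eq_or_trancl)
    then obtain y where "(y, u) \<in> T" by (auto dest: tranclD2)
    then show "u \<in> snd ` T" by force
  qed
  have "card (C - {r}) \<le> card (snd ` T)" using heads finT by (intro card_mono) auto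
  moreover have le: "card (snd ` T) \<le> card T" using card_image_le finT by blast
  moreover have "card (C - {r}) = card T" using cardT r finC by simp
  ultimately have "inj_on snd T" using finT by (intro eq_card_imp_inj_on) auto
  moreover have "r \<notin> snd ` T"
  proof
    assume "r \<in> snd ` T"
    then have "C \<subseteq> snd ` T" using heads by auto
    then have "card C \<le> card (snd ` T)" using finT by (intro card_mono) auto
    then show False using le cardT by simp
  qed
  ultimately show ?thesis using that r by blast
qed

lemma weak_comp_arc_closed:
  assumes "F \<subseteq> V \<times> V" "x \<in> weak_comp V F v" "(x, y) \<in> F \<or> (y, x) \<in> F"
  shows "y \<in> weak_comp V F v"
proof -
  have "(x, y) \<in> F \<union> F\<inverse>" using assms(3) by auto
  then show ?thesis using assms(1,2) unfolding weak_comp_def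
    by (auto intro: rtrancl_into_rtrancl)
qed

lemma out_forest_imp_sources:
  assumes AV: "A \<subseteq> V \<times> V" and of: "out_forest V A F"
  shows "inj_on snd F" and "\<forall>v\<in>V. \<exists>r\<in>V. r \<notin> snd ` F \<and> (r, v) \<in> F\<^sup>*"
proof -
  have FV: "F \<subseteq> V \<times> V" using of AV unfolding out_forest_def by blast
  have tree: "diverging_tree (weak_comp V F v) (F \<inter> weak_comp V F v \<times> weak_comp V F v)"
    if "v \<in> V" for v
    using of that unfolding out_forest_def by blast
  have self: "v \<in> weak_comp V F v" if "v \<in> V" for v
    using that unfolding weak_comp_def by simp
  show "inj_on snd F"
  proof (rule inj_onI)
    fix x y assume x: "x \<in> F" and y: "y \<in> F" and eq: "snd x = snd y"
    obtain a b where x_ab: "x = (a, b)" by (cases x)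
    then obtain a' where y_ab: "y = (a', b)" using eq by (cases y) auto
    have bV: "b \<in> V" using x x_ab FV by auto
    define C where "C = weak_comp V F b"
    have bC: "b \<in> C" using self[OF bV] unfolding C_def .
    then have "a \<in> C" "a' \<in> C"
      using weak_comp_arc_closed[OF FV] x y x_ab y_ab unfolding C_def by blast+
    then have "x \<in> F \<inter> C \<times> C" "y \<in> F \<inter> C \<times> C" using x y x_ab y_ab bC by auto
    moreover have "inj_on snd (F \<inter> C \<times> C)"
      using diverging_tree_root[OF tree[OF bV]] unfolding C_def by metis
    ultimately show "x = y" using eq by (auto dest: inj_onD)
  qed
  show "\<forall>v\<in>V. \<exists>r\<in>V. r \<notin> snd ` F \<and> (r, v) \<in> F\<^sup>*"
  proof
    fix v assume v: "v \<in> V"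
    define C where "C = weak_comp V F v"
    obtain r where r: "r \<in> C" "r \<notin> snd ` (F \<inter> C \<times> C)" "\<forall>u\<in>C. (r, u) \<in> (F \<inter> C \<times> C)\<^sup>*"
      using tree[OF v] unfolding C_def by (rule diverging_tree_root)
    have "r \<notin> snd ` F"
    proof
      assume "r \<in> snd ` F"
      then obtain a where a: "(a, r) \<in> F" by force
      then have "a \<in> C" using weak_comp_arc_closed[OF FV] r(1) unfolding C_def by blast
      then show False using a r by force
    qed
    moreover have "(r, v) \<in> F\<^sup>*"
      using r(3) self[OF v] rtrancl_mono[of "F \<inter> C \<times> C" F] unfolding C_def by blast
    moreover have "r \<in> V" using r(1) unfolding C_def weak_comp_def by simp
    ultimately show "\<exists>r\<in>V. r \<notin> snd ` F \<and> (r, v) \<in> F\<^sup>*" by blast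
  qed
qed

lemma out_forest_if_sources:
  assumes finV: "finite V" and AV: "A \<subseteq> V \<times> V" and FA: "F \<subseteq> A" and inj: "inj_on snd F"
    and src: "\<forall>v\<in>V. \<exists>r. r \<notin> snd ` F \<and> (r, v) \<in> F\<^sup>*"
  shows "out_forest V A F"
  unfolding out_forest_def
proof (intro conjI ballI FA)
  fix v assume v: "v \<in> V"
  have FV: "F \<subseteq> V \<times> V" using FA AV by blast
  define C where "C = weak_comp V F v"
  let ?T = "F \<inter> C \<times> C"
  obtain r where r: "r \<notin> snd ` F" "(r, v) \<in> F\<^sup>*" using src v by blast
  have rV: "r \<in> V" using rtrancl_source_in[OF r(2) FV v] .
  have "(v, r) \<in> (F \<union> F\<inverse>)\<^sup>*"
    using r(2) rtrancl_converse[of F] rtrancl_mono[of "F\<inverse>" "F \<union> F\<inverse>"] by auto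
  then have rC: "r \<in> C" unfolding C_def weak_comp_def using rV by simp
  have reachT: "(r, u) \<in> ?T\<^sup>*" if "u \<in> C" for u
  proof -
    have "(r, u) \<in> F\<^sup>*"
      using that reach_from_source_along_weak_path[OF _ r(2) r(1) inj]
      unfolding C_def weak_comp_def by blast
    then have "(r, u) \<in> ?T\<^sup>* \<and> u \<in> C"
    proof (induction rule: rtrancl_induct)
      case (step y z)
      then have zC: "z \<in> C" using weak_comp_arc_closed[OF FV] unfolding C_def by blast
      then have "(y, z) \<in> ?T" using step.hyps(2) step.IH by blast
      then show ?case using step.IH zC rtrancl_into_rtrancl[of r y ?T z] by blast
    qed (use rC in simp)
    then show ?thesis by simp
  qed
  have finC: "finite C" using finV unfolding C_def weak_comp_def by auto
  have "snd ` ?T = C - {r}"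
  proof
    show "snd ` ?T \<subseteq> C - {r}" using r(1) by force
    show "C - {r} \<subseteq> snd ` ?T"
    proof
      fix u assume "u \<in> C - {r}"
      then have "(r, u) \<in> ?T\<^sup>+" using reachT by (auto simp: rtrancl_eq_or_trancl)
      then obtain y where "(y, u) \<in> ?T" by (auto dest: tranclD2)
      then show "u \<in> snd ` ?T" by force
    qed
  qed
  moreover have "card ?T = card (snd ` ?T)"
    using inj_on_subset[OF inj] by (simp add: card_image)
  ultimately have "card ?T + 1 = card C" using rC finC card_gt_0_iff[of C] by auto
  then show "diverging_tree (weak_comp V F v) (F \<inter> weak_comp V F v \<times> weak_comp V F v)"
    unfolding diverging_tree_def C_def[symmetric] using finC rC reachT by auto
qed

lemma out_forest_iff_branching:
  assumes "finite V" "A \<subseteq> V \<times> V"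
  shows "out_forest V A F \<longleftrightarrow> F \<subseteq> A \<and> branching F"
proof
  assume of: "out_forest V A F"
  then have FA: "F \<subseteq> A" unfolding out_forest_def by blast
  have inj: "inj_on snd F" using out_forest_imp_sources(1)[OF assms(2) of] .
  have "\<forall>v\<in>V. \<exists>r. r \<notin> snd ` F \<and> (r, v) \<in> F\<^sup>*"
    using out_forest_imp_sources(2)[OF assms(2) of] by blast
  moreover have "F \<subseteq> V \<times> V" using FA assms(2) by blast
  ultimately have "acyclic F" using acyclic_if_reached_from_sources[OF inj] by blast
  then show "F \<subseteq> A \<and> branching F" using FA inj unfolding branching_def by blast
next
  assume "F \<subseteq> A \<and> branching F"
  then have FA: "F \<subseteq> A" and inj: "inj_on snd F" and ac: "acyclic F"
    unfolding branching_def by auto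
  have "F \<subseteq> V \<times> V" using FA assms(2) by blast
  then have "finite F" using finite_subset assms(1) by auto
  then have "\<forall>v\<in>V. \<exists>r. r \<notin> snd ` F \<and> (r, v) \<in> F\<^sup>*"
    using finite_acyclic_reached_from_source[OF _ ac] by blast
  then show "out_forest V A F" using out_forest_if_sources[OF assms FA inj] by blast
qed


section \<open>The exchange argument\<close>

lemma branching_attach_source:
  assumes "branching F" "finite F" "r \<notin> snd ` F" "(r, a) \<notin> F\<^sup>*"
  shows "branching (insert (a, r) F)" and "card (insert (a, r) F) = Suc (card F)"
proof -
  have new: "(a, r) \<notin> F" using assms(3) by force
  have "r \<notin> snd ` (F - {(a, r)})" using assms(3) by blast
  then show "branching (insert (a, r) F)" using assms(1,4) unfolding branching_def by simp
  show "card (insert (a, r) F) = Suc (card F)" using new assms(2) by simp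
qed

lemma branching_reroute:
  assumes br: "branching F" and fin: "finite F" and r: "r \<notin> snd ` F"
    and rp: "(r, p) \<in> F\<^sup>*" and pb: "(p, b) \<in> F" and ra: "(r, a) \<notin> F\<^sup>*"
  defines "G \<equiv> insert (a, b) (F - {(p, b)})"
  shows "branching G" "card G = card F" "r \<notin> snd ` G" "G\<^sup>* `` {r} \<subseteq> F\<^sup>* `` {r} - {b}"
proof -
  have inj: "inj_on snd F" and ac: "acyclic F" using br unfolding branching_def by auto
  have parent: "q = p" if "(q, b) \<in> F" for q using inj_onD[OF inj _ that pb] by simp
  have rb: "(r, b) \<in> F\<^sup>*" using rp pb by (rule rtrancl_into_rtrancl)
  have "a \<noteq> p" using rp ra by blast
  then have new: "(a, b) \<notin> F - {(p, b)}" using parent by auto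
  moreover have "card F > 0" using fin pb card_gt_0_iff by blast
  ultimately show "card G = card F" using fin pb unfolding G_def by (simp add: card_Diff_singleton)
  have "b \<notin> snd ` (F - {(p, b)})" using parent by force
  moreover have "(b, a) \<notin> (F - {(p, b)})\<^sup>*"
    using rtrancl_mono[of "F - {(p, b)}" F] rb ra by (meson Diff_subset rtrancl_trans subsetD)
  ultimately show "branching G"
    using inj_on_diff[OF inj] acyclic_subset[OF ac] unfolding G_def branching_def by auto
  have b_neq_r: "b \<noteq> r" using r pb by force
  then show "r \<notin> snd ` G" using r unfolding G_def by force
  show "G\<^sup>* `` {r} \<subseteq> F\<^sup>* `` {r} - {b}"
  proof
    fix v assume "v \<in> G\<^sup>* `` {r}"
    then have "(r, v) \<in> G\<^sup>*" by simp
    then have "(r, v) \<in> F\<^sup>* \<and> v \<noteq> b"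
    proof (induction rule: rtrancl_induct)
      case (step u v')
      show ?case
      proof (cases "(u, v') = (a, b)")
        case True
        then show ?thesis using step ra by simp
      next
        case False
        then have "(u, v') \<in> F" "(u, v') \<noteq> (p, b)" using step.hyps(2) unfolding G_def by auto
        then show ?thesis using step.IH parent by (auto intro: rtrancl_into_rtrancl)
      qed
    qed (use b_neq_r in simp)
    then show "v \<in> F\<^sup>* `` {r} - {b}" by simp
  qed
qed

text \<open>Induction on
  the size of r's subtree: an arc of A enters that subtree; if it enters at r
  we attach r, otherwise re-routing shrinks the subtree.\<close>
lemma larger_branching_if_source_misses:
  assumes finA: "finite A" and FA: "F \<subseteq> A" and br: "branching F" and r: "r \<notin> snd ` F"
    and xr: "(x, r) \<in> A\<^sup>*" and rx: "(r, x) \<notin> F\<^sup>*"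
  shows "\<exists>G \<subseteq> A. branching G \<and> card F < card G"
  using FA br r rx
proof (induction "card (F\<^sup>* `` {r})" arbitrary: F rule: less_induct)
  case (less F)
  let ?T = "F\<^sup>* `` {r}"
  have finF: "finite F" using less.prems(1) finA finite_subset by blast
  have finT: "finite ?T"
  proof (rule finite_subset)
    show "?T \<subseteq> insert r (snd ` F)"
    proof
      fix v assume "v \<in> ?T"
      then have "(r, v) \<in> F\<^sup>*" by simp
      then show "v \<in> insert r (snd ` F)" by (cases rule: rtranclE) force+
    qed
    show "finite (insert r (snd ` F))" using finF by simp
  qed
  obtain a b where ab: "(a, b) \<in> A" "a \<notin> ?T" "b \<in> ?T"
    using rtrancl_enters_set[OF xr, of ?T] less.prems(4) by auto
  have ra: "(r, a) \<notin> F\<^sup>*" using ab(2) by simp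
  show ?case
  proof (cases "b = r")
    case True
    note attach = branching_attach_source[OF less.prems(2) finF less.prems(3) ra]
    have "insert (a, r) F \<subseteq> A" using True ab(1) less.prems(1) by simp
    then show ?thesis using attach by (intro exI[of _ "insert (a, r) F"]) simp
  next
    case False
    then have "(r, b) \<in> F\<^sup>+" using ab(3) by (auto simp: rtrancl_eq_or_trancl)
    then obtain p where rp: "(r, p) \<in> F\<^sup>*" and pb: "(p, b) \<in> F" by (auto dest: tranclD2)
    define G where "G = insert (a, b) (F - {(p, b)})"
    note reroute = branching_reroute[OF less.prems(2) finF less.prems(3) rp pb ra, folded G_def]
    have "G\<^sup>* `` {r} \<subset> ?T" using reroute(4) ab(3) by blast
    then have smaller: "card (G\<^sup>* `` {r}) < card ?T" using psubset_card_mono[OF finT] by blast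
    have GA: "G \<subseteq> A" using ab(1) less.prems(1) unfolding G_def by auto
    have rx: "(r, x) \<notin> G\<^sup>*" using reroute(4) less.prems(4) by blast
    obtain H where "H \<subseteq> A" "branching H" "card G < card H"
      using less.hyps[OF smaller GA reroute(1) reroute(3) rx] by blast
    then show ?thesis using reroute(2) by auto
  qed
qed

lemma max_out_forest_root_reaches:
  assumes finV: "finite V" and AV: "A \<subseteq> V \<times> V" and mF: "max_out_forest V A F"
    and r: "r \<notin> snd ` F" and xr: "(x, r) \<in> A\<^sup>*"
  shows "(r, x) \<in> F\<^sup>*"
proof (rule ccontr)
  assume rx: "(r, x) \<notin> F\<^sup>*"
  have finA: "finite A" using finite_subset[OF AV] finV by simp
  have "F \<subseteq> A" "branching F"
    using mF out_forest_iff_branching[OF finV AV] unfolding max_out_forest_def by blast+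
  then obtain G where G: "G \<subseteq> A" "branching G" and larger: "card F < card G"
    using larger_branching_if_source_misses[OF finA _ _ r xr rx] by blast
  have "out_forest V A G" using G out_forest_iff_branching[OF finV AV] by blast
  then have "card G \<le> card F" using mF unfolding max_out_forest_def by blast
  then show False using larger by simp
qed

text \<open>Maximum out-forests exist: the empty arc set is an out-forest and the
  size of out-forests is bounded by |A|.\<close>
lemma max_out_forest_exists:
  assumes finV: "finite V" and AV: "A \<subseteq> V \<times> V"
  shows "\<exists>F. max_out_forest V A F"
proof -
  have finA: "finite A" using finite_subset[OF AV] finV by simp
  have "out_forest V A {}"
    using out_forest_iff_branching[OF finV AV] unfolding branching_def by (simp add: acyclic_def)
  moreover have "\<forall>G. out_forest V A G \<longrightarrow> card G < Suc (card A)"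
    using finA by (auto simp: out_forest_def le_imp_less_Suc card_mono)
  ultimately obtain F where "out_forest V A F" "\<forall>G. out_forest V A G \<longrightarrow> card G \<le> card F"
    using Lattices_Big.ex_has_greatest_nat[of "out_forest V A" "{}" card] by blast
  then show ?thesis unfolding max_out_forest_def by blast
qed


section \<open>Roots of maximum out-forests and basis bicomponents\<close>

lemma basis_bicomp_backward_closed:
  assumes "basis_bicomp V A K" "(x, y) \<in> A\<^sup>*" "y \<in> K"
  shows "x \<in> K"
  using assms(2,3)
  by (induction rule: converse_rtrancl_induct) (use assms(1) in \<open>auto simp: basis_bicomp_def\<close>)

lemma strong_comp_self: "v \<in> V \<Longrightarrow> v \<in> strong_comp V A v"
  unfolding strong_comp_def by simp

lemma basis_bicomp_connected:
  assumes "basis_bicomp V A K" "x \<in> K" "y \<in> K"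
  shows "(x, y) \<in> A\<^sup>*"
proof -
  obtain v where "K = strong_comp V A v" using assms(1) unfolding basis_bicomp_def by blast
  then have "(x, v) \<in> A\<^sup>*" "(v, y) \<in> A\<^sup>*" using assms(2,3) unfolding strong_comp_def by auto
  then show ?thesis by (rule rtrancl_trans)
qed

lemma max_out_forest_rtrancl:
  assumes "max_out_forest V A F" "(a, b) \<in> F\<^sup>*"
  shows "(a, b) \<in> A\<^sup>*"
proof -
  have "F \<subseteq> A" using assms(1) unfolding max_out_forest_def out_forest_def by blast
  then show ?thesis using rtrancl_mono assms(2) by blast
qed

text \<open>The strong component of a root of a maximum out-forest is a basis
  bicomponent: any arc entering it comes from a vertex reached by the root.\<close>
lemma root_strong_comp_basis:
  assumes finV: "finite V" and AV: "A \<subseteq> V \<times> V" and mF: "max_out_forest V A F"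
    and rV: "r \<in> V" and r: "r \<notin> snd ` F"
  shows "basis_bicomp V A (strong_comp V A r)"
  unfolding basis_bicomp_def
proof (intro conjI)
  show "\<exists>v\<in>V. strong_comp V A r = strong_comp V A v" using rV by blast
  show "\<forall>(u, v)\<in>A. v \<in> strong_comp V A r \<longrightarrow> u \<in> strong_comp V A r"
  proof clarify
    fix u v assume uv: "(u, v) \<in> A" and v: "v \<in> strong_comp V A r"
    then have ur: "(u, r) \<in> A\<^sup>*"
      unfolding strong_comp_def by (auto intro: converse_rtrancl_into_rtrancl)
    then have "(r, u) \<in> F\<^sup>*" using max_out_forest_root_reaches[OF finV AV mF r] by blast
    then have "(r, u) \<in> A\<^sup>*" by (rule max_out_forest_rtrancl[OF mF])
    then show "u \<in> strong_comp V A r" using ur uv AV unfolding strong_comp_def by auto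
  qed
qed

lemma in_tree_rooted_path: "in_tree_rooted V F i j \<Longrightarrow> (j, i) \<in> F\<^sup>*"
  unfolding in_tree_rooted_def by blast

lemma in_tree_rooted_root: "in_tree_rooted V F i j \<Longrightarrow> in_tree_rooted V F j j"
  unfolding in_tree_rooted_def weak_comp_def by auto

text \<open>A root of a tree of an out-forest has no incoming arc (that arc would
  close a cycle).\<close>
lemma tree_root_no_parent:
  assumes finV: "finite V" and AV: "A \<subseteq> V \<times> V" and of: "out_forest V A F"
    and root: "in_tree_rooted V F i i"
  shows "i \<notin> snd ` F"
proof
  assume "i \<in> snd ` F"
  then obtain a where a: "(a, i) \<in> F" by force
  have FA: "F \<subseteq> A" and ac: "acyclic F"
    using of out_forest_iff_branching[OF finV AV] unfolding branching_def by auto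
  have "i \<in> weak_comp V F i" using root unfolding in_tree_rooted_def by blast
  then have "a \<in> weak_comp V F i"
    using weak_comp_arc_closed[of F V i i a] a FA AV by blast
  then have "(i, a) \<in> F\<^sup>*" using root unfolding in_tree_rooted_def by blast
  then have "(i, i) \<in> F\<^sup>+" using a by (rule rtrancl_into_trancl1)
  then show False using ac unfolding acyclic_def by blast
qed

lemma in_tree_rooted_if_source:
  assumes AV: "A \<subseteq> V \<times> V" and of: "out_forest V A F" and jV: "j \<in> V" and iV: "i \<in> V"
    and i: "i \<notin> snd ` F" and ij: "(i, j) \<in> F\<^sup>*"
  shows "in_tree_rooted V F j i"
proof -
  have inj: "inj_on snd F" using out_forest_imp_sources(1)[OF AV of] .
  have "(i, j) \<in> (F \<union> F\<inverse>)\<^sup>*" using ij rtrancl_mono[of F "F \<union> F\<inverse>"] by blast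
  then show ?thesis
    using reach_from_source_along_weak_path[OF _ _ i inj] iV jV
    unfolding in_tree_rooted_def weak_comp_def by auto
qed

text \<open>If i is a root of a maximum out-forest whose tree does not contain j,
  then the root r of j's tree reaches j but cannot reach i in the digraph:
  otherwise i would reach r, and hence j, inside the forest.\<close>
lemma separating_root:
  assumes finV: "finite V" and AV: "A \<subseteq> V \<times> V" and mF: "max_out_forest V A F"
    and iV: "i \<in> V" and jV: "j \<in> V"
    and root: "in_tree_rooted V F i i" and notin: "\<not> in_tree_rooted V F j i"
  shows "\<exists>r\<in>V. r \<notin> snd ` F \<and> (r, j) \<in> A\<^sup>* \<and> (r, i) \<notin> A\<^sup>*"
proof -
  have of: "out_forest V A F" using mF unfolding max_out_forest_def by blast
  have i: "i \<notin> snd ` F" using tree_root_no_parent[OF finV AV of root] .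
  obtain r where rV: "r \<in> V" and r: "r \<notin> snd ` F" and rj: "(r, j) \<in> F\<^sup>*"
    using out_forest_imp_sources(2)[OF AV of] jV by blast
  have "(r, i) \<notin> A\<^sup>*"
  proof
    assume "(r, i) \<in> A\<^sup>*"
    then have "(i, r) \<in> F\<^sup>*" using max_out_forest_root_reaches[OF finV AV mF i] by blast
    then have "(i, j) \<in> F\<^sup>*" using rj by (rule rtrancl_trans)
    then show False using in_tree_rooted_if_source[OF AV of jV iV i] notin by blast
  qed
  moreover have "(r, j) \<in> A\<^sup>*" using max_out_forest_rtrancl[OF mF rj] .
  ultimately show ?thesis using rV r by blast
qed


section \<open>Weights of families of maximum out-forests\<close>

definition forest_weight ::
    "'a set \<Rightarrow> ('a \<times> 'a) set \<Rightarrow> ('a \<times> 'a \<Rightarrow> real) \<Rightarrow> (('a \<times> 'a) set \<Rightarrow> bool) \<Rightarrow> real" where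
  "forest_weight V A w P = (\<Sum>F\<in>{F. max_out_forest V A F \<and> P F}. subgraph_weight w F)"

lemma Jbar_forest_weight:
  "Jbar V A w i j = forest_weight V A w (\<lambda>F. in_tree_rooted V F i j) / forest_weight V A w (\<lambda>_. True)"
  unfolding Jbar_def forest_weight_def by simp

lemma finite_max_out_forests:
  assumes "wdigraph V A w"
  shows "finite {F. max_out_forest V A F \<and> P F}"
proof (rule finite_subset)
  show "{F. max_out_forest V A F \<and> P F} \<subseteq> Pow A"
    unfolding max_out_forest_def out_forest_def by blast
  have "finite A" using assms finite_subset[of A "V \<times> V"] unfolding wdigraph_def by auto
  then show "finite (Pow A)" by simp
qed

lemma subgraph_weight_pos:
  assumes "wdigraph V A w" "max_out_forest V A F"
  shows "subgraph_weight w F > 0"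
  using assms unfolding wdigraph_def max_out_forest_def out_forest_def subgraph_weight_def
  by (intro prod_pos) blast

lemma forest_weight_pos_iff:
  assumes g: "wdigraph V A w"
  shows "forest_weight V A w P > 0 \<longleftrightarrow> (\<exists>F. max_out_forest V A F \<and> P F)"
proof
  assume pos: "forest_weight V A w P > 0"
  show "\<exists>F. max_out_forest V A F \<and> P F"
  proof (rule ccontr)
    assume "\<nexists>F. max_out_forest V A F \<and> P F"
    then have "{F. max_out_forest V A F \<and> P F} = {}" by blast
    then have "forest_weight V A w P = 0" unfolding forest_weight_def by (metis sum.empty)
    then show False using pos by simp
  qed
next
  assume "\<exists>F. max_out_forest V A F \<and> P F"
  then show "forest_weight V A w P > 0"
    unfolding forest_weight_def
    using finite_max_out_forests[OF g] subgraph_weight_pos[OF g] by (intro sum_pos) auto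
qed

lemma total_forest_weight_pos:
  assumes g: "wdigraph V A w"
  shows "forest_weight V A w (\<lambda>_. True) > 0"
proof -
  have "finite V" "A \<subseteq> V \<times> V" using g unfolding wdigraph_def by auto
  then obtain F where "max_out_forest V A F" using max_out_forest_exists by blast
  then show ?thesis using forest_weight_pos_iff[OF g] by blast
qed

lemma forest_weight_mono:
  assumes g: "wdigraph V A w" and PQ: "\<And>F. max_out_forest V A F \<Longrightarrow> P F \<Longrightarrow> Q F"
  shows "forest_weight V A w P \<le> forest_weight V A w Q"
    and "forest_weight V A w P < forest_weight V A w Q \<longleftrightarrow>
           (\<exists>F. max_out_forest V A F \<and> Q F \<and> \<not> P F)"
proof -
  let ?S = "\<lambda>P. {F. max_out_forest V A F \<and> P F}"
  let ?R = "\<lambda>F. Q F \<and> \<not> P F"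
  have sub: "?S P \<subseteq> ?S Q" using PQ by blast
  have diff: "?S Q - ?S P = ?S ?R" by blast
  have split: "forest_weight V A w Q = forest_weight V A w ?R + forest_weight V A w P"
    unfolding forest_weight_def
    using sum.subset_diff[OF sub finite_max_out_forests[OF g, of Q], of "subgraph_weight w"]
    by (simp only: diff)
  have "forest_weight V A w ?R \<ge> 0"
    unfolding forest_weight_def using subgraph_weight_pos[OF g] by (intro sum_nonneg) (simp add: less_imp_le)
  then show "forest_weight V A w P \<le> forest_weight V A w Q" using split by simp
  show "forest_weight V A w P < forest_weight V A w Q \<longleftrightarrow> (\<exists>F. max_out_forest V A F \<and> Q F \<and> \<not> P F)"
    using split forest_weight_pos_iff[OF g, of ?R] \<open>forest_weight V A w ?R \<ge> 0\<close> by auto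
qed

lemma Jbar_pos_iff:
  assumes g: "wdigraph V A w"
  shows "Jbar V A w i j > 0 \<longleftrightarrow> (\<exists>F. max_out_forest V A F \<and> in_tree_rooted V F i j)"
  using total_forest_weight_pos[OF g] forest_weight_pos_iff[OF g, of "\<lambda>F. in_tree_rooted V F i j"]
  by (simp add: Jbar_forest_weight zero_less_divide_iff)

text \<open>Whenever i lies in the tree rooted at j, the vertex j is a root, so the
  column entry Jbar j i is dominated by the diagonal entry Jbar i i, strictly
  iff some maximum out-forest has i as a root and j outside its tree.\<close>
lemma Jbar_column_vs_diagonal:
  assumes g: "wdigraph V A w"
  shows "Jbar V A w j i \<le> Jbar V A w i i"
    and "Jbar V A w j i < Jbar V A w i i \<longleftrightarrow>
           (\<exists>F. max_out_forest V A F \<and> in_tree_rooted V F i i \<and> \<not> in_tree_rooted V F j i)"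
proof -
  have D: "forest_weight V A w (\<lambda>_. True) > 0" using total_forest_weight_pos[OF g] .
  have "in_tree_rooted V F i i" if "in_tree_rooted V F j i" for F
    using that by (rule in_tree_rooted_root)
  note mono = forest_weight_mono[OF g, of "\<lambda>F. in_tree_rooted V F j i" "\<lambda>F. in_tree_rooted V F i i",
      OF this]
  show "Jbar V A w j i \<le> Jbar V A w i i"
    using mono(1) D unfolding Jbar_forest_weight by (simp add: divide_right_mono)
  show "Jbar V A w j i < Jbar V A w i i \<longleftrightarrow>
          (\<exists>F. max_out_forest V A F \<and> in_tree_rooted V F i i \<and> \<not> in_tree_rooted V F j i)"
    using mono(2) D unfolding Jbar_forest_weight by (simp add: divide_less_cancel)
qed


lemma Jbar_diagonal_gt_imp:
  assumes g: "wdigraph V A w" and iV: "i \<in> V" and jV: "j \<in> V"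
    and lt: "Jbar V A w j i < Jbar V A w i i"
  shows "i \<in> Ktilde V A \<and> j \<notin> Kplus V A i \<and> (j, i) \<notin> A\<^sup>*"
proof -
  have finV: "finite V" and AV: "A \<subseteq> V \<times> V" using g unfolding wdigraph_def by auto
  obtain F where mF: "max_out_forest V A F" and root: "in_tree_rooted V F i i"
    and notin: "\<not> in_tree_rooted V F j i"
    using lt Jbar_column_vs_diagonal(2)[OF g] by blast
  have i: "i \<notin> snd ` F"
    using tree_root_no_parent[OF finV AV _ root] mF unfolding max_out_forest_def by blast
  obtain r where rV: "r \<in> V" and r: "r \<notin> snd ` F" and rj: "(r, j) \<in> A\<^sup>*" and ri: "(r, i) \<notin> A\<^sup>*"
    using separating_root[OF finV AV mF iV jV root notin] by blast
  have Ki: "basis_bicomp V A (strong_comp V A i)" and Kr: "basis_bicomp V A (strong_comp V A r)"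
    using root_strong_comp_basis[OF finV AV mF] iV i rV r by auto
  have "strong_comp V A r \<noteq> strong_comp V A i"
    using strong_comp_self[OF iV] ri unfolding strong_comp_def by auto
  then have "j \<notin> Kplus V A i"
    using Kr strong_comp_self[OF rV] rj unfolding Kplus_def by blast
  moreover have "i \<in> Ktilde V A" using Ki strong_comp_self[OF iV] unfolding Ktilde_def by blast
  moreover have "(j, i) \<notin> A\<^sup>*" using rj ri by (meson rtrancl_trans)
  ultimately show ?thesis by blast
qed

text \<open>Item (3): if moreover i lies in some tree rooted at j, then j cannot be
  in a basis bicomponent (i would belong to it too and j would reach i), so
  j is never a root of a maximum out-forest.\<close>
lemma Jbar_diagonal_gt_pos_imp:
  assumes g: "wdigraph V A w" and iV: "i \<in> V" and jV: "j \<in> V"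
    and lt: "Jbar V A w j i < Jbar V A w i i" and pos: "Jbar V A w j i > 0"
  shows "j \<notin> Ktilde V A \<and> (\<forall>F. max_out_forest V A F \<longrightarrow> \<not> is_root V F j)"
proof -
  have finV: "finite V" and AV: "A \<subseteq> V \<times> V" using g unfolding wdigraph_def by auto
  have ji: "(j, i) \<notin> A\<^sup>*" using Jbar_diagonal_gt_imp[OF g iV jV lt] by blast
  obtain F1 where mF1: "max_out_forest V A F1" and tree: "in_tree_rooted V F1 j i"
    using pos Jbar_pos_iff[OF g] by blast
  have ij: "(i, j) \<in> A\<^sup>*" using max_out_forest_rtrancl[OF mF1 in_tree_rooted_path[OF tree]] .
  have notK: "j \<notin> Ktilde V A"
  proof
    assume "j \<in> Ktilde V A"
    then obtain K where K: "basis_bicomp V A K" "j \<in> K" unfolding Ktilde_def by blast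
    then have "i \<in> K" using basis_bicomp_backward_closed[OF K(1) ij K(2)] by blast
    then have "(j, i) \<in> A\<^sup>*" using basis_bicomp_connected[OF K] by blast
    then show False using ji by blast
  qed
  have "\<not> is_root V F j" if mF: "max_out_forest V A F" for F
  proof
    assume "is_root V F j"
    moreover have "out_forest V A F" using mF unfolding max_out_forest_def by blast
    ultimately have "j \<notin> snd ` F" using tree_root_no_parent[OF finV AV] unfolding is_root_def by blast
    then have "basis_bicomp V A (strong_comp V A j)" by (rule root_strong_comp_basis[OF finV AV mF jV])
    then have "j \<in> Ktilde V A" using strong_comp_self[OF jV] unfolding Ktilde_def by blast
    then show False using notK by blast
  qed
  then show ?thesis using notK by blast
qed

text \<open>Item (4): if j lies in a tree rooted at i, then j reaches i, which rules
  out the strict inequality of item (2).\<close>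
lemma Jbar_diagonal_eq_if_pos:
  assumes g: "wdigraph V A w" and iV: "i \<in> V" and jV: "j \<in> V"
    and pos: "Jbar V A w i j > 0"
  shows "Jbar V A w i i = Jbar V A w j i"
proof (rule ccontr)
  assume "Jbar V A w i i \<noteq> Jbar V A w j i"
  then have "Jbar V A w j i < Jbar V A w i i"
    using Jbar_column_vs_diagonal(1)[OF g, of j i] by simp
  then have ji: "(j, i) \<notin> A\<^sup>*" using Jbar_diagonal_gt_imp[OF g iV jV] by blast
  obtain F0 where mF0: "max_out_forest V A F0" and tree: "in_tree_rooted V F0 i j"
    using pos Jbar_pos_iff[OF g] by blast
  have "(j, i) \<in> A\<^sup>*" using max_out_forest_rtrancl[OF mF0 in_tree_rooted_path[OF tree]] .
  then show False using ji by blast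
qed

theorem theorem3:
  fixes V :: "'a set" and A :: "('a \<times> 'a) set" and w :: "'a \<times> 'a \<Rightarrow> real"
  assumes "wdigraph V A w" and "i \<in> V" and "j \<in> V"
  shows "Jbar V A w i i \<ge> Jbar V A w j i
    \<and> (Jbar V A w i i > Jbar V A w j i \<longrightarrow>
           i \<in> Ktilde V A \<and> j \<notin> Kplus V A i \<and> (j, i) \<notin> A\<^sup>*)
    \<and> (Jbar V A w i i > Jbar V A w j i \<and> Jbar V A w j i > 0 \<longrightarrow>
           j \<notin> Ktilde V A \<and> (\<forall>F. max_out_forest V A F \<longrightarrow> \<not> is_root V F j))
    \<and> (Jbar V A w i j > 0 \<longrightarrow> Jbar V A w i i = Jbar V A w j i)"
proof (intro conjI impI)
  show "Jbar V A w j i \<le> Jbar V A w i i" using Jbar_column_vs_diagonal(1)[OF assms(1)] .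
next
  assume "Jbar V A w j i < Jbar V A w i i"
  then show "i \<in> Ktilde V A" "j \<notin> Kplus V A i" "(j, i) \<notin> A\<^sup>*"
    using Jbar_diagonal_gt_imp[OF assms] by blast+
next
  assume "Jbar V A w j i < Jbar V A w i i \<and> Jbar V A w j i > 0"
  then show "j \<notin> Ktilde V A" "\<forall>F. max_out_forest V A F \<longrightarrow> \<not> is_root V F j"
    using Jbar_diagonal_gt_pos_imp[OF assms] by blast+
next
  assume "Jbar V A w i j > 0"
  then show "Jbar V A w i i = Jbar V A w j i" by (rule Jbar_diagonal_eq_if_pos[OF assms])
qed

end
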